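(* Let $\chi:T\to\overline{\mathbf F}_p^\times$ be a smooth character with $\chi\neq\chi^s$, and let $\pi'$ be a smooth representation of $G$. Then every non-zero $\phi\in\mathrm{Hom}_P(\mathrm{Ind}_P^G\chi,\pi')$ is injective.
   Context: $F$ non-Archimedean local field of residual characteristic $p$, $G=\mathrm{GL}_2(F)$, $P$ the upper triangular Borel subgroup, $U$ its unipotent radical, $T$ the diagonal torus; characters of $T$ are viewed as characters of $P$ via $P\to P/U\cong T$. $\chi^s(\mathrm{diag}(a,d))=\chi(\mathrm{diag}(d,a))$. $\mathrm{Ind}_P^G\chi$ is the space of locally constant $f:G\to\overline{\mathbf F}_p$ with $f(bg)=\chi(b)f(g)$ for $b\in P$, with $G$ acting by right translation. Representations are smooth on $\overline{\mathbf F}_p$-vector spaces. *)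

theory Defs
  imports "HOL-Computational_Algebra.Polynomial"
begin

definition is_Fpbar :: "nat \<Rightarrow> 'k::field itself \<Rightarrow> bool" where
  "is_Fpbar p TYPE('k) \<longleftrightarrow>
     prime p \<and> CHAR('k) = p \<and>
     (\<forall>q::'k poly. degree q > 0 \<longrightarrow> (\<exists>x. poly q x = 0)) \<and>
     (\<forall>x::'k. \<exists>q::'k poly. q \<noteq> 0 \<and> (\<forall>i. coeff q i \<in> range of_nat) \<and> poly q x = 0)"

text \<open>v is the normalized discrete valuation (its value at 0 is irrelevant).
  close v n x y means x - y lies in p_F^n (the ideal of elements of valuation at least n).\<close>

definition close :: "('f::field \<Rightarrow> int) \<Rightarrow> int \<Rightarrow> 'f \<Rightarrow> 'f \<Rightarrow> bool" where
  "close v n x y \<longleftrightarrow> x = y \<or> v (x - y) \<ge> n"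

definition nonarch_local_field :: "('f::field \<Rightarrow> int) \<Rightarrow> nat \<Rightarrow> bool" where
  "nonarch_local_field v p \<longleftrightarrow>
     \<comment> \<open>discrete valuation, normalized (surjective onto Z)\<close>
     (\<forall>x y. x \<noteq> 0 \<longrightarrow> y \<noteq> 0 \<longrightarrow> v (x * y) = v x + v y) \<and>
     (\<forall>x y. x \<noteq> 0 \<longrightarrow> y \<noteq> 0 \<longrightarrow> x + y \<noteq> 0 \<longrightarrow> v (x + y) \<ge> min (v x) (v y)) \<and>
     (\<forall>n. \<exists>x. x \<noteq> 0 \<and> v x = n) \<and>
     \<comment> \<open>completeness\<close>
     (\<forall>s::nat \<Rightarrow> 'f. (\<forall>n. \<exists>N. \<forall>i\<ge>N. \<forall>j\<ge>N. close v n (s i) (s j)) \<longrightarrow>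
        (\<exists>L. \<forall>n. \<exists>N. \<forall>i\<ge>N. close v n (s i) L)) \<and>
     \<comment> \<open>finite residue field O/p_F\<close>
     (\<exists>R. finite R \<and> (\<forall>a. (a = 0 \<or> v a \<ge> 0) \<longrightarrow> (\<exists>r\<in>R. close v 1 a r))) \<and>
     \<comment> \<open>residual characteristic p\<close>
     prime p \<and> close v 1 (of_nat p) 0"

type_synonym 'f mat2 = "'f \<times> 'f \<times> 'f \<times> 'f"  \<comment> \<open>(a,b,c,d) = [[a,b],[c,d]]\<close>

fun mmul :: "'f::field mat2 \<Rightarrow> 'f mat2 \<Rightarrow> 'f mat2" where
  "mmul (a, b, c, d) (a', b', c', d') =
     (a * a' + b * c', a * b' + b * d', c * a' + d * c', c * b' + d * d')"

definition one2 :: "'f::field mat2" where "one2 = (1, 0, 0, 1)"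

definition GL2 :: "'f::field mat2 set" where
  "GL2 = {(a, b, c, d). a * d - b * c \<noteq> 0}"

definition Borel :: "'f::field mat2 set" where
  "Borel = {(a, b, c, d). c = 0 \<and> a \<noteq> 0 \<and> d \<noteq> 0}"

fun mclose :: "('f::field \<Rightarrow> int) \<Rightarrow> int \<Rightarrow> 'f mat2 \<Rightarrow> 'f mat2 \<Rightarrow> bool" where
  "mclose v n (a, b, c, d) (a', b', c', d') \<longleftrightarrow>
     close v n a a' \<and> close v n b b' \<and> close v n c c' \<and> close v n d d'"

text \<open>Congruence subgroup K_n = ker(GL_2(O) -> GL_2(O/p^n)); the K_n (n \<ge> 1) form a
  neighbourhood basis of 1 in G.\<close>
definition Kcong :: "('f::field \<Rightarrow> int) \<Rightarrow> int \<Rightarrow> 'f mat2 set" where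
  "Kcong v n = {g \<in> GL2. mclose v n g one2}"

text \<open>A character of T is given by chi a d = chi(diag(a,d)).\<close>
definition smooth_char_T ::
  "('f::field \<Rightarrow> int) \<Rightarrow> ('f \<Rightarrow> 'f \<Rightarrow> 'k::field) \<Rightarrow> bool" where
  "smooth_char_T v chi \<longleftrightarrow>
     (\<forall>a d. a \<noteq> 0 \<longrightarrow> d \<noteq> 0 \<longrightarrow> chi a d \<noteq> 0) \<and>
     (\<forall>a d a' d'. a \<noteq> 0 \<longrightarrow> d \<noteq> 0 \<longrightarrow> a' \<noteq> 0 \<longrightarrow> d' \<noteq> 0 \<longrightarrow>
        chi (a * a') (d * d') = chi a d * chi a' d') \<and>
     (\<exists>n. \<forall>a d. a \<noteq> 0 \<longrightarrow> d \<noteq> 0 \<longrightarrow> close v n a 1 \<longrightarrow> close v n d 1 \<longrightarrow> chi a d = 1)"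

definition conj_s :: "('f \<Rightarrow> 'f \<Rightarrow> 'k) \<Rightarrow> ('f \<Rightarrow> 'f \<Rightarrow> 'k)" where
  "conj_s chi = (\<lambda>a d. chi d a)"

text \<open>Inflation of chi to P via P -> P/U = T.\<close>
fun charP :: "('f \<Rightarrow> 'f \<Rightarrow> 'k) \<Rightarrow> 'f mat2 \<Rightarrow> 'k" where
  "charP chi (a, b, c, d) = chi a d"

definition locally_constant_G ::
  "('f::field \<Rightarrow> int) \<Rightarrow> ('f mat2 \<Rightarrow> 'k) \<Rightarrow> bool" where
  "locally_constant_G v f \<longleftrightarrow>
     (\<forall>g\<in>GL2. \<exists>n. \<forall>h\<in>GL2. mclose v n g h \<longrightarrow> f h = f g)"

text \<open>Functions on G are represented as functions on all matrices vanishing off G.\<close>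
definition Ind :: "('f::field \<Rightarrow> int) \<Rightarrow> ('f \<Rightarrow> 'f \<Rightarrow> 'k::field) \<Rightarrow> ('f mat2 \<Rightarrow> 'k) set" where
  "Ind v chi = {f. locally_constant_G v f \<and> (\<forall>x. x \<notin> GL2 \<longrightarrow> f x = 0) \<and>
                  (\<forall>b\<in>Borel. \<forall>g\<in>GL2. f (mmul b g) = charP chi b * f g)}"

definition rtrans :: "'f::field mat2 \<Rightarrow> ('f mat2 \<Rightarrow> 'k::field) \<Rightarrow> ('f mat2 \<Rightarrow> 'k)" where
  "rtrans g f = (\<lambda>x. if x \<in> GL2 then f (mmul x g) else 0)"

definition smooth_rep ::
  "('f::field \<Rightarrow> int) \<Rightarrow> ('k::field \<Rightarrow> 'w::ab_group_add \<Rightarrow> 'w) \<Rightarrow> ('f mat2 \<Rightarrow> 'w \<Rightarrow> 'w) \<Rightarrow> bool" where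
  "smooth_rep v scale act \<longleftrightarrow>
     vector_space scale \<and>
     (\<forall>g\<in>GL2. Vector_Spaces.linear scale scale (act g)) \<and>
     (\<forall>w. act one2 w = w) \<and>
     (\<forall>g\<in>GL2. \<forall>h\<in>GL2. \<forall>w. act (mmul g h) w = act g (act h w)) \<and>
     (\<forall>w. \<exists>n. \<forall>g\<in>Kcong v n. act g w = w)"

definition HomP ::
  "('f::field \<Rightarrow> int) \<Rightarrow> ('f \<Rightarrow> 'f \<Rightarrow> 'k::field) \<Rightarrow> ('k \<Rightarrow> 'w::ab_group_add \<Rightarrow> 'w) \<Rightarrow>
   ('f mat2 \<Rightarrow> 'w \<Rightarrow> 'w) \<Rightarrow> (('f mat2 \<Rightarrow> 'k) \<Rightarrow> 'w) set" where
  "HomP v chi scale act =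
     {\<phi>. (\<forall>f\<in>Ind v chi. \<forall>g\<in>Ind v chi. \<phi> (\<lambda>x. f x + g x) = \<phi> f + \<phi> g) \<and>
          (\<forall>c. \<forall>f\<in>Ind v chi. \<phi> (\<lambda>x. c * f x) = scale c (\<phi> f)) \<and>
          (\<forall>b\<in>Borel. \<forall>f\<in>Ind v chi. \<phi> (rtrans b f) = act b (\<phi> f))}"

end

theory Submission
  imports Defs "HOL-Library.Indicator_Function"
begin

text \<open>Let K be the kernel of phi and Ind0 the functions in Ind chi vanishing at 1, i.e. those
  supported on the big cell P w U. Restricting along x \<mapsto> w u(x) identifies Ind0 with the compactly
  supported locally constant functions on F, on which P acts through the affine maps x \<mapsto> a x + t.
  So the restrictions of K \<inter> Ind0 form a space stable under translations and dilations. In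
  characteristic p a translation T satisfies (T - 1)^p = T^p - 1, hence every finite group of
  translations has a nonzero fixed vector in such a space; descending through the ideals p_F^j this
  yields the indicator of some p_F^m, and then every compactly supported locally constant function.
  Thus either K \<inter> Ind0 = 0 or Ind0 \<subseteq> K.

  If Ind0 \<subseteq> K, then phi f is a P-eigenvector with character chi for every f, since
  rtrans b f - chi(b) f lies in Ind0. A smooth G-representation fixes such a vector by both unipotent
  radicals, hence by every diag(a, 1/a), which forces chi = chi^s; so phi = 0.
  If K \<inter> Ind0 = 0, the same argument makes every h \<in> K a P-eigenfunction under right translation;
  comparing h at w diag(a, d) = diag(d, a) w shows h w = 0, and local constancy at 1 gives h 1 = 0,
  so h \<in> K \<inter> Ind0 and h = 0.\<close>

section \<open>Valuations, balls and uniform local constancy\<close>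

definition pow_ideal :: "('f::field \<Rightarrow> int) \<Rightarrow> int \<Rightarrow> 'f set" where
  "pow_ideal v n = {z. z = 0 \<or> n \<le> v z}"

lemma close_iff_diff_mem: "close v n x y \<longleftrightarrow> x - y \<in> pow_ideal v n"
  by (auto simp: close_def pow_ideal_def)

lemma close_refl [simp]: "close v n x x"
  by (simp add: close_def)

lemma close_0_iff [simp]: "close v n x 0 \<longleftrightarrow> x \<in> pow_ideal v n"
  by (simp add: close_iff_diff_mem)

lemma pow_ideal_antimono: "m \<le> n \<Longrightarrow> pow_ideal v n \<subseteq> pow_ideal v m"
  by (auto simp: pow_ideal_def)

lemma close_mono: "m \<le> n \<Longrightarrow> close v n x y \<Longrightarrow> close v m x y"
  unfolding close_iff_diff_mem using pow_ideal_antimono by blast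

definition translation_invariant :: "'a::plus set \<Rightarrow> ('a \<Rightarrow> 'b) \<Rightarrow> bool" where
  "translation_invariant A \<psi> \<longleftrightarrow> (\<forall>t\<in>A. \<forall>x. \<psi> (x + t) = \<psi> x)"

locale local_field =
  fixes v :: "'f::field \<Rightarrow> int" and p :: nat
  assumes v_mult: "x \<noteq> 0 \<Longrightarrow> y \<noteq> 0 \<Longrightarrow> v (x * y) = v x + v y"
    and v_add: "x \<noteq> 0 \<Longrightarrow> y \<noteq> 0 \<Longrightarrow> x + y \<noteq> 0 \<Longrightarrow> min (v x) (v y) \<le> v (x + y)"
    and exists_valuation: "\<exists>x. x \<noteq> 0 \<and> v x = n"
    and complete: "\<forall>n. \<exists>N::nat. \<forall>i\<ge>N. \<forall>j\<ge>N. close v n (s i) (s j) \<Longrightarrow>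
      \<exists>L. \<forall>n. \<exists>N. \<forall>i\<ge>N. close v n (s i) L"
    and finite_residues: "\<exists>R. finite R \<and> (\<forall>a\<in>pow_ideal v 0. \<exists>r\<in>R. close v 1 a r)"
    and prime_residue_char: "prime p"
    and residue_char: "of_nat p \<in> pow_ideal v 1"

lemma local_fieldI: "nonarch_local_field v p \<Longrightarrow> local_field v p"
  unfolding nonarch_local_field_def local_field_def pow_ideal_def close_def by auto

context local_field
begin

lemma v_one [simp]: "v 1 = 0"
  using v_mult[of 1 1] by simp

lemma v_uminus [simp]: "v (- x) = v x"
proof (cases "x = 0")
  case False
  have "v (-1) = 0"
    using v_mult[of "-1" "-1"] by simp
  with False show ?thesis
    using v_mult[of "-1" x] by simp
qed simp

lemma v_inverse: "x \<noteq> 0 \<Longrightarrow> v (inverse x) = - v x"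
  using v_mult[of x "inverse x"] by simp

lemma uminus_mem_pow_ideal_iff [simp]: "- a \<in> pow_ideal v n \<longleftrightarrow> a \<in> pow_ideal v n"
  by (auto simp: pow_ideal_def)

lemma pow_ideal_add: "a \<in> pow_ideal v n \<Longrightarrow> b \<in> pow_ideal v n \<Longrightarrow> a + b \<in> pow_ideal v n"
  unfolding pow_ideal_def using v_add[of a b] by fastforce

lemma pow_ideal_diff: "a \<in> pow_ideal v n \<Longrightarrow> b \<in> pow_ideal v n \<Longrightarrow> a - b \<in> pow_ideal v n"
  using pow_ideal_add[of a n "- b"] by simp

lemma pow_ideal_mult: "a \<in> pow_ideal v n \<Longrightarrow> b \<in> pow_ideal v m \<Longrightarrow> a * b \<in> pow_ideal v (n + m)"
  unfolding pow_ideal_def using v_mult[of a b] by (cases "a = 0 \<or> b = 0") auto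

lemma mult_mem_pow_ideal_iff:
  "e \<noteq> 0 \<Longrightarrow> a * e \<in> pow_ideal v (n + v e) \<longleftrightarrow> a \<in> pow_ideal v n"
  unfolding pow_ideal_def using v_mult[of a e] by (cases "a = 0") auto

lemma mem_pow_ideal_valuation: "x \<in> pow_ideal v (v x)"
  by (simp add: pow_ideal_def)

lemma close_sym: "close v n x y \<Longrightarrow> close v n y x"
  unfolding close_def by (metis minus_diff_eq v_uminus)

lemma close_trans: "close v n x y \<Longrightarrow> close v n y z \<Longrightarrow> close v n x z"
  unfolding close_iff_diff_mem using pow_ideal_add[of "x - y" n "y - z"] by simp

lemma finite_residue_field:
  "\<exists>R. finite R \<and> R \<subseteq> pow_ideal v 0 \<and> (\<forall>a\<in>pow_ideal v 0. \<exists>r\<in>R. close v 1 a r)"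
proof -
  obtain R where R: "finite R" "\<forall>a\<in>pow_ideal v 0. \<exists>r\<in>R. close v 1 a r"
    using finite_residues by blast
  have "\<exists>r\<in>R \<inter> pow_ideal v 0. close v 1 a r" if a: "a \<in> pow_ideal v 0" for a
  proof -
    obtain r where r: "r \<in> R" "close v 1 a r"
      using R(2) a by blast
    have "r \<in> pow_ideal v 0"
      using pow_ideal_diff[OF a, of "a - r"] close_mono[OF _ r(2), of 0] by (simp add: close_iff_diff_mem)
    with r show ?thesis
      by auto
  qed
  with R(1) show ?thesis
    by (intro exI[of _ "R \<inter> pow_ideal v 0"]) auto
qed

lemma finite_subball_cover:
  "\<exists>C. finite C \<and> (\<forall>c'\<in>C. close v n c' c) \<and>
     (\<forall>y. close v n y c \<longrightarrow> (\<exists>c'\<in>C. close v (n + 1) y c'))"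
proof -
  obtain R where R: "finite R" "R \<subseteq> pow_ideal v 0" "\<And>a. a \<in> pow_ideal v 0 \<Longrightarrow> \<exists>r\<in>R. close v 1 a r"
    using finite_residue_field by blast
  obtain e where e: "e \<noteq> 0" "v e = n"
    using exists_valuation by blast
  have "\<exists>r\<in>R. close v (n + 1) y (c + r * e)" if "close v n y c" for y
  proof -
    define a where "a = (y - c) / e"
    have ae: "a * e = y - c"
      using e(1) by (simp add: a_def)
    then have "a * e \<in> pow_ideal v (0 + v e)"
      using that e by (simp add: close_iff_diff_mem)
    then obtain r where "r \<in> R" "close v 1 a r"
      using R(3) mult_mem_pow_ideal_iff[OF e(1)] by blast
    then have r: "r \<in> R" "(a - r) * e \<in> pow_ideal v (1 + v e)"
      using mult_mem_pow_ideal_iff[OF e(1)] by (simp_all add: close_iff_diff_mem)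
    moreover have "(a - r) * e = y - (c + r * e)"
      using ae by (simp add: left_diff_distrib)
    ultimately show ?thesis
      using e(2) by (auto simp: close_iff_diff_mem add.commute)
  qed
  moreover have "close v n (c + r * e) c" if "r \<in> R" for r
    using pow_ideal_mult[of r 0 e n] R(2) that e by (auto simp: close_iff_diff_mem mem_pow_ideal_valuation)
  ultimately show ?thesis
    using R(1) by (intro exI[of _ "(\<lambda>r. c + r * e) ` R"]) auto
qed

lemma finite_ball_cover:
  assumes "m \<le> n"
  shows "\<exists>C. finite C \<and> (\<forall>y. close v m y c \<longrightarrow> (\<exists>c'\<in>C. close v n y c'))"
  using assms
proof (induction n rule: int_ge_induct)
  case base
  show ?case
    by (intro exI[of _ "{c}"]) auto
next
  case (step n)
  then obtain C where C: "finite C" "\<And>y. close v m y c \<Longrightarrow> \<exists>c'\<in>C. close v n y c'"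
    by blast
  have "\<forall>c'. \<exists>D. finite D \<and> (\<forall>y. close v n y c' \<longrightarrow> (\<exists>c''\<in>D. close v (n + 1) y c''))"
    using finite_subball_cover[of n] by blast
  then obtain D where D: "\<forall>c'. finite (D c') \<and>
      (\<forall>y. close v n y c' \<longrightarrow> (\<exists>c''\<in>D c'. close v (n + 1) y c''))"
    by (rule choice[THEN exE])
  show ?case
    using C D by (intro exI[of _ "\<Union>(D ` C)"]) (simp, metis)
qed

lemma nested_balls_intersect:
  assumes "\<And>k. close v (m + int k) (c (Suc k)) (c k)"
  shows "\<exists>L. \<forall>k. close v (m + int k) (c k) L"
proof -
  have chain: "close v (m + int k) (c (k + i)) (c k)" for k i
  proof (induction i)
    case (Suc i)
    have "close v (m + int k) (c (Suc (k + i))) (c (k + i))"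
      using close_mono[OF _ assms[of "k + i"]] by simp
    with Suc show ?case
      using close_trans by simp
  qed simp
  have tail: "close v (m + int k) (c i) (c k)" if "k \<le> i" for i k
    using chain[of k "i - k"] that by simp
  have "\<exists>N. \<forall>i\<ge>N. \<forall>j\<ge>N. close v n (c i) (c j)" for n
  proof (intro exI allI impI)
    fix i j assume "nat (n - m) \<le> i" "nat (n - m) \<le> j"
    then have "close v (m + int (nat (n - m))) (c i) (c j)"
      using close_trans[OF tail close_sym[OF tail]] by blast
    then show "close v n (c i) (c j)"
      by (rule close_mono[rotated]) simp
  qed
  then obtain L where L: "\<And>n. \<exists>N. \<forall>i\<ge>N. close v n (c i) L"
    using complete by blast
  have "close v (m + int k) (c k) L" for k
  proof -
    obtain N where "\<forall>i\<ge>N. close v (m + int k) (c i) L"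
      using L by blast
    then have "close v (m + int k) (c (max N k)) L"
      by simp
    then show ?thesis
      using close_trans[OF close_sym[OF tail[of k "max N k"]]] by simp
  qed
  then show ?thesis
    by blast
qed

end

definition uniformly_constant_on_ball :: "('f::field \<Rightarrow> int) \<Rightarrow> ('f \<Rightarrow> 'a) \<Rightarrow> int \<Rightarrow> 'f \<Rightarrow> bool" where
  "uniformly_constant_on_ball v \<psi> n c \<longleftrightarrow>
     (\<exists>N. \<forall>x y. close v n x c \<longrightarrow> close v N x y \<longrightarrow> \<psi> x = \<psi> y)"

context local_field
begin

lemma uniformly_constant_on_ball_if_on_subballs:
  assumes "\<And>c'. close v n c' c \<Longrightarrow> uniformly_constant_on_ball v \<psi> (n + 1) c'"
  shows "uniformly_constant_on_ball v \<psi> n c"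
proof -
  obtain C where C: "finite C" "\<forall>c'\<in>C. close v n c' c"
    "\<forall>y. close v n y c \<longrightarrow> (\<exists>c'\<in>C. close v (n + 1) y c')"
    using finite_subball_cover[of n c] by blast
  have "\<forall>c'\<in>C. uniformly_constant_on_ball v \<psi> (n + 1) c'"
    using assms C(2) by blast
  then obtain N where N: "\<forall>c'\<in>C. \<forall>x y. close v (n + 1) x c' \<longrightarrow> close v (N c') x y \<longrightarrow> \<psi> x = \<psi> y"
    unfolding uniformly_constant_on_ball_def by (rule bchoice[THEN exE])
  show ?thesis
    unfolding uniformly_constant_on_ball_def
  proof (intro exI allI impI)
    fix x y assume x: "close v n x c" and xy: "close v (Max (insert 0 (N ` C))) x y"
    obtain c' where c': "c' \<in> C" "close v (n + 1) x c'"
      using C(3) x by blast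
    have "N c' \<le> Max (insert 0 (N ` C))"
      using C(1) c'(1) by simp
    then have "close v (N c') x y"
      using close_mono xy by blast
    then show "\<psi> x = \<psi> y"
      using N c' by blast
  qed
qed

lemma exists_non_uniform_subball:
  assumes "\<not> uniformly_constant_on_ball v \<psi> n c"
  shows "\<exists>c'. close v n c' c \<and> \<not> uniformly_constant_on_ball v \<psi> (n + 1) c'"
  using assms uniformly_constant_on_ball_if_on_subballs by blast

text \<open>Compactness of balls: otherwise there is a nested sequence of non-uniform balls, and \<psi> is
  constant near their common point.\<close>
lemma uniformly_constant_on_ball_if_locally_constant:
  assumes lc: "\<And>x. \<exists>n. \<forall>y. close v n x y \<longrightarrow> \<psi> y = \<psi> x"
  shows "uniformly_constant_on_ball v \<psi> m c"
proof (rule ccontr)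
  define bad where "bad k c \<longleftrightarrow> \<not> uniformly_constant_on_ball v \<psi> (m + int k) c" for k c
  assume "\<not> ?thesis"
  then have bad_0: "bad 0 c"
    by (simp add: bad_def)
  have bad_Suc: "\<exists>c''. bad (Suc k) c'' \<and> close v (m + int k) c'' c'" if bad_k: "bad k c'" for k c'
  proof -
    obtain c'' where "close v (m + int k) c'' c'" "\<not> uniformly_constant_on_ball v \<psi> (m + int k + 1) c''"
      using exists_non_uniform_subball bad_k unfolding bad_def by blast
    moreover have Suc_k: "m + int (Suc k) = m + int k + 1"
      by simp
    ultimately show ?thesis
      unfolding bad_def Suc_k by blast
  qed
  have "\<exists>c. \<forall>k. bad k (c k) \<and> close v (m + int k) (c (Suc k)) (c k)"
    using bad_0 bad_Suc by (intro dependent_nat_choice) blast+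
  then obtain c where c: "\<And>k. bad k (c k)" "\<And>k. close v (m + int k) (c (Suc k)) (c k)"
    by blast
  obtain L where L: "\<And>k. close v (m + int k) (c k) L"
    using nested_balls_intersect[OF c(2)] by blast
  obtain n0 where n0: "\<And>y. close v n0 L y \<Longrightarrow> \<psi> y = \<psi> L"
    using lc by blast
  define k where "k = nat (n0 - m)"
  have "close v n0 L x" if "close v (m + int k) x (c k)" for x
  proof -
    have "close v (m + int k) L x"
      using close_trans[OF close_sym[OF L] close_sym[OF that]] .
    moreover have "n0 \<le> m + int k"
      by (simp add: k_def)
    ultimately show ?thesis
      using close_mono by blast
  qed
  then have "uniformly_constant_on_ball v \<psi> (m + int k) (c k)"
    unfolding uniformly_constant_on_ball_def
    by (metis close_trans n0)
  with c(1) show False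
    by (simp add: bad_def)
qed

lemma translation_invariant_if_locally_constant_compact_support:
  fixes \<psi> :: "'f \<Rightarrow> 'a::zero"
  assumes lc: "\<And>x. \<exists>n. \<forall>y. close v n x y \<longrightarrow> \<psi> y = \<psi> x"
    and supp: "{x. \<psi> x \<noteq> 0} \<subseteq> pow_ideal v m"
  shows "\<exists>n. translation_invariant (pow_ideal v n) \<psi>"
proof -
  obtain N where N: "\<And>x y. close v m x 0 \<Longrightarrow> close v N x y \<Longrightarrow> \<psi> x = \<psi> y"
    using uniformly_constant_on_ball_if_locally_constant[OF lc, of m 0]
    unfolding uniformly_constant_on_ball_def by blast
  have "\<psi> (x + t) = \<psi> x" if t: "t \<in> pow_ideal v (max N m)" for t x
  proof (cases "x \<in> pow_ideal v m")
    case True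
    have "t \<in> pow_ideal v m" "t \<in> pow_ideal v N"
      using t pow_ideal_antimono[of m "max N m" v] pow_ideal_antimono[of N "max N m" v] by auto
    then have "close v m (x + t) 0" "close v N (x + t) x"
      using True pow_ideal_add by (simp_all add: close_iff_diff_mem)
    then show ?thesis
      using N by blast
  next
    case False
    have "t \<in> pow_ideal v m"
      using t pow_ideal_antimono[of m "max N m" v] by auto
    then have "x + t \<notin> pow_ideal v m"
      using False pow_ideal_diff[of "x + t" m t] by auto
    with False show ?thesis
      using supp by (metis (mono_tags, lifting) mem_Collect_eq subset_eq)
  qed
  then show ?thesis
    unfolding translation_invariant_def by blast
qed

end

section \<open>Difference operators in characteristic p\<close>

definition diff_op :: "'a::plus \<Rightarrow> ('a \<Rightarrow> 'k::minus) \<Rightarrow> 'a \<Rightarrow> 'k" where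
  "diff_op t \<psi> = (\<lambda>x. \<psi> (x + t) - \<psi> x)"

text \<open>The value at x of P(T) \<psi>, where T is translation by t.\<close>
definition translate_poly :: "'k::comm_ring_1 poly \<Rightarrow> 'a::semiring_1 \<Rightarrow> ('a \<Rightarrow> 'k) \<Rightarrow> 'a \<Rightarrow> 'k" where
  "translate_poly P t \<psi> x = (\<Sum>i\<le>degree P. coeff P i * \<psi> (x + of_nat i * t))"

lemma translate_poly_eq_sum:
  "degree P \<le> N \<Longrightarrow> translate_poly P t \<psi> x = (\<Sum>i\<le>N. coeff P i * \<psi> (x + of_nat i * t))"
  unfolding translate_poly_def by (rule sum.mono_neutral_left) (auto simp: coeff_eq_0)

lemma translate_poly_diff:
  "translate_poly (P - Q) t \<psi> x = translate_poly P t \<psi> x - translate_poly Q t \<psi> x"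
proof -
  let ?N = "max (degree P) (degree Q)"
  have "degree (P - Q) \<le> ?N"
    by (rule degree_diff_le) simp_all
  then show ?thesis
    by (simp add: translate_poly_eq_sum[of _ ?N] left_diff_distrib sum_subtractf)
qed

lemma translate_poly_monom: "translate_poly (monom 1 j) t \<psi> x = \<psi> (x + of_nat j * t)"
proof -
  have "coeff (monom 1 j) i * \<psi> (x + of_nat i * t) = (if i = j then \<psi> (x + of_nat i * t) else 0)" for i
    by (simp add: coeff_monom)
  then show ?thesis
    by (simp add: translate_poly_def degree_monom_eq)
qed

lemma funpow_diff_op:
  fixes \<psi> :: "'a::semiring_1 \<Rightarrow> 'k::comm_ring_1"
  shows "(diff_op t ^^ m) \<psi> (x + of_nat j * t) = translate_poly (monom 1 j * (monom 1 1 - 1) ^ m) t \<psi> x"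
proof (induction m arbitrary: j)
  case 0
  then show ?case
    by (simp add: translate_poly_monom)
next
  case (Suc m)
  have "x + of_nat j * t + t = x + of_nat (Suc j) * t"
    by (simp add: algebra_simps)
  then have "(diff_op t ^^ Suc m) \<psi> (x + of_nat j * t)
      = (diff_op t ^^ m) \<psi> (x + of_nat (Suc j) * t) - (diff_op t ^^ m) \<psi> (x + of_nat j * t)"
    by (simp add: diff_op_def)
  also have "\<dots> = translate_poly (monom 1 (Suc j) * (monom 1 1 - 1) ^ m - monom 1 j * (monom 1 1 - 1) ^ m) t \<psi> x"
    by (simp only: Suc.IH translate_poly_diff)
  also have "monom 1 (Suc j) * (monom 1 1 - 1) ^ m - monom 1 j * (monom 1 1 - 1) ^ m
      = monom (1::'k) j * (monom 1 1 - 1) ^ Suc m"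
  proof -
    have "monom (1::'k) (Suc j) = monom 1 j * monom 1 1"
      by (simp add: mult_monom)
    then show ?thesis
      by (simp only: power_Suc) (simp add: algebra_simps)
  qed
  finally show ?case .
qed

lemma monom_minus_one_power_CHAR:
  assumes "prime CHAR('k::comm_ring_1)"
  shows "(monom (1::'k) 1 - 1) ^ CHAR('k) = monom 1 CHAR('k) - 1"
proof -
  have "(monom (1::'k) 1 + (- 1)) ^ CHAR('k) = monom 1 1 ^ CHAR('k) + (- 1) ^ CHAR('k)"
    by (rule freshmans_dream) (use assms in simp_all)
  then show ?thesis
    using minus_power_prime_CHAR[where 'a = "'k poly", of "CHAR('k)" 1] assms by (simp add: monom_power)
qed

lemma funpow_diff_op_CHAR:
  fixes \<psi> :: "'a::semiring_1 \<Rightarrow> 'k::comm_ring_1"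
  assumes "prime CHAR('k)"
  shows "(diff_op t ^^ CHAR('k)) \<psi> x = \<psi> (x + of_nat CHAR('k) * t) - \<psi> x"
proof -
  have "(diff_op t ^^ CHAR('k)) \<psi> x = (diff_op t ^^ CHAR('k)) \<psi> (x + of_nat 0 * t)"
    by simp
  also have "\<dots> = translate_poly (monom 1 0 * (monom 1 1 - 1) ^ CHAR('k)) t \<psi> x"
    by (rule funpow_diff_op)
  also have "monom 1 0 * (monom 1 1 - 1) ^ CHAR('k) = monom 1 CHAR('k) - (monom (1::'k) 0)"
    using monom_minus_one_power_CHAR[OF assms] by (simp add: one_pCons)
  finally show ?thesis
    by (simp only: translate_poly_diff translate_poly_monom) simp
qed

lemma translation_invariant_diff_op:
  "translation_invariant A \<psi> \<Longrightarrow> translation_invariant A (diff_op t (\<psi> :: 'a::ab_semigroup_add \<Rightarrow> 'k::minus))"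
  unfolding translation_invariant_def diff_op_def by (metis add.commute add.left_commute)

text \<open>Since (T - 1)^p = T^p - 1 for the translation T by t, the periodicity hypothesis makes
  diff_op t nilpotent on S, and its last nonzero iterate is t-invariant.\<close>
lemma exists_translation_invariant_iterate:
  fixes S :: "('a::ring_1 \<Rightarrow> 'k::comm_ring_1) set"
  assumes char: "prime CHAR('k)" and "finite T" and "\<psi> \<in> S" and "\<psi> \<noteq> (\<lambda>x. 0)"
    and closed: "\<And>t \<phi>. t \<in> T \<Longrightarrow> \<phi> \<in> S \<Longrightarrow> diff_op t \<phi> \<in> S"
    and periodic: "\<And>t \<phi> x. t \<in> T \<Longrightarrow> \<phi> \<in> S \<Longrightarrow> \<phi> (x + of_nat CHAR('k) * t) = \<phi> x"
  shows "\<exists>\<phi>\<in>S. \<phi> \<noteq> (\<lambda>x. 0) \<and> translation_invariant T \<phi>"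
  using \<open>finite T\<close> closed periodic
proof (induction T rule: finite_induct)
  case empty
  then show ?case
    using assms(3,4) by (auto simp: translation_invariant_def)
next
  case (insert t T)
  then obtain \<phi> where \<phi>: "\<phi> \<in> S" "\<phi> \<noteq> (\<lambda>x. 0)" "translation_invariant T \<phi>"
    by blast
  let ?S = "S \<inter> {\<phi>. translation_invariant T \<phi>}"
  have iterate: "(diff_op t ^^ k) \<phi> \<in> ?S" for k
    by (induction k) (use \<phi> insert.prems(1) translation_invariant_diff_op in auto)
  have "(diff_op t ^^ CHAR('k)) \<phi> x = 0" for x
    using funpow_diff_op_CHAR[OF char, of t \<phi> x] insert.prems(2)[of t \<phi> x] \<phi>(1) by simp
  then have "(diff_op t ^^ CHAR('k)) \<phi> = (\<lambda>x. 0)"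
    by blast
  then obtain k where k: "(diff_op t ^^ k) \<phi> \<noteq> (\<lambda>x. 0)" "diff_op t ((diff_op t ^^ k) \<phi>) = (\<lambda>x. 0)"
    using ex_least_nat_less[of "\<lambda>k. (diff_op t ^^ k) \<phi> = (\<lambda>x. 0)"] \<phi>(2) by auto
  have "translation_invariant {t} ((diff_op t ^^ k) \<phi>)"
    using fun_cong[OF k(2)] by (simp add: translation_invariant_def diff_op_def)
  with iterate[of k] k(1) show ?case
    by (auto simp: translation_invariant_def)
qed

section \<open>Translation- and dilation-stable spaces of functions on F\<close>

context local_field
begin

lemma support_diff_op:
  fixes \<psi> :: "'f \<Rightarrow> 'k::ab_group_add"
  assumes "{x. \<psi> x \<noteq> 0} \<subseteq> pow_ideal v m" and "t \<in> pow_ideal v m"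
  shows "{x. diff_op t \<psi> x \<noteq> 0} \<subseteq> pow_ideal v m"
proof
  fix y assume "y \<in> {x. diff_op t \<psi> x \<noteq> 0}"
  then have "\<psi> (y + t) \<noteq> 0 \<or> \<psi> y \<noteq> 0"
    by (auto simp: diff_op_def)
  then have "y + t \<in> pow_ideal v m \<or> y \<in> pow_ideal v m"
    using assms(1) by blast
  then show "y \<in> pow_ideal v m"
    using pow_ideal_diff[of "y + t" m t] assms(2) by auto
qed

end

locale affine_stable_space = local_field v p
  for v :: "'f::field \<Rightarrow> int" and p +
  fixes V :: "('f \<Rightarrow> 'k::field) set"
  assumes char: "CHAR('k) = p"
    and add_mem: "\<psi> \<in> V \<Longrightarrow> \<phi> \<in> V \<Longrightarrow> (\<lambda>x. \<psi> x + \<phi> x) \<in> V"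
    and smult_mem: "\<psi> \<in> V \<Longrightarrow> (\<lambda>x. c * \<psi> x) \<in> V"
    and translate_mem: "\<psi> \<in> V \<Longrightarrow> (\<lambda>x. \<psi> (x + t)) \<in> V"
    and dilate_mem: "\<psi> \<in> V \<Longrightarrow> a \<noteq> 0 \<Longrightarrow> (\<lambda>x. \<psi> (a * x)) \<in> V"
begin

lemma diff_op_mem: "\<psi> \<in> V \<Longrightarrow> diff_op t \<psi> \<in> V"
  using add_mem[OF translate_mem[where t = t] smult_mem[where c = "- 1"]] by (simp add: diff_op_def)

lemma exists_coarser_invariant:
  assumes "\<psi> \<in> V" "\<psi> \<noteq> (\<lambda>x. 0)" "translation_invariant (pow_ideal v j) \<psi>"
    and supp: "{x. \<psi> x \<noteq> 0} \<subseteq> pow_ideal v m" and "m < j"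
  shows "\<exists>\<psi>'\<in>V. \<psi>' \<noteq> (\<lambda>x. 0) \<and> translation_invariant (pow_ideal v (j - 1)) \<psi>' \<and>
    {x. \<psi>' x \<noteq> 0} \<subseteq> pow_ideal v m"
proof -
  obtain C where C: "finite C" "\<forall>c\<in>C. close v (j - 1) c 0"
    "\<forall>s. close v (j - 1) s 0 \<longrightarrow> (\<exists>c\<in>C. close v (j - 1 + 1) s c)"
    using finite_subball_cover[of "j - 1" 0] by (elim exE conjE) (rule that)
  have C_m: "c \<in> pow_ideal v m" if "c \<in> C" for c
  proof -
    have "c \<in> pow_ideal v (j - 1)"
      using C(2) that by simp
    moreover have "pow_ideal v (j - 1) \<subseteq> pow_ideal v m"
      by (rule pow_ideal_antimono) (use \<open>m < j\<close> in simp)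
    ultimately show ?thesis
      by blast
  qed
  define S where "S = V \<inter> {\<phi>. translation_invariant (pow_ideal v j) \<phi> \<and> {x. \<phi> x \<noteq> 0} \<subseteq> pow_ideal v m}"
  have closed: "diff_op t \<phi> \<in> S" if "t \<in> C" "\<phi> \<in> S" for t \<phi>
  proof -
    have \<phi>: "\<phi> \<in> V" "translation_invariant (pow_ideal v j) \<phi>" "{x. \<phi> x \<noteq> 0} \<subseteq> pow_ideal v m"
      using that(2) by (simp_all add: S_def)
    show ?thesis
      using diff_op_mem[OF \<phi>(1)] translation_invariant_diff_op[OF \<phi>(2)]
        support_diff_op[OF \<phi>(3) C_m[OF that(1)]]
      by (simp add: S_def)
  qed
  have periodic: "\<phi> (x + of_nat CHAR('k) * t) = \<phi> x" if "t \<in> C" "\<phi> \<in> S" for t \<phi> x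
  proof -
    have "t \<in> pow_ideal v (j - 1)"
      using C(2) that(1) by simp
    then have "of_nat p * t \<in> pow_ideal v (1 + (j - 1))"
      by (rule pow_ideal_mult[OF residue_char])
    moreover have "translation_invariant (pow_ideal v j) \<phi>"
      using that(2) by (simp add: S_def)
    ultimately have "\<phi> (x + of_nat p * t) = \<phi> x"
      unfolding translation_invariant_def by simp
    then show ?thesis
      by (simp add: char)
  qed
  have "\<psi> \<in> S"
    using assms by (simp add: S_def)
  then have "\<exists>\<phi>\<in>S. \<phi> \<noteq> (\<lambda>x. 0) \<and> translation_invariant C \<phi>"
    using exists_translation_invariant_iterate[OF _ C(1) _ assms(2) closed periodic] char prime_residue_char
    by simp
  then obtain \<phi> where \<phi>: "\<phi> \<in> S" "\<phi> \<noteq> (\<lambda>x. 0)" "translation_invariant C \<phi>"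
    by blast
  have "\<phi> (x + s) = \<phi> x" if s: "s \<in> pow_ideal v (j - 1)" for s x
  proof -
    obtain c where c: "c \<in> C" "s - c \<in> pow_ideal v j"
      using C(3) s by (auto simp: close_iff_diff_mem)
    have "\<phi> (x + s) = \<phi> ((x + c) + (s - c))"
      by simp
    also have "\<dots> = \<phi> (x + c)"
      using \<phi>(1) c(2) unfolding S_def translation_invariant_def by blast
    also have "\<dots> = \<phi> x"
      using \<phi>(3) c(1) unfolding translation_invariant_def by blast
    finally show ?thesis .
  qed
  then have "translation_invariant (pow_ideal v (j - 1)) \<phi>"
    by (simp add: translation_invariant_def)
  with \<phi>(1,2) show ?thesis
    unfolding S_def by blast
qed

lemma exists_invariant_at_support_level:
  assumes "m \<le> j"
  shows "\<psi> \<in> V \<Longrightarrow> \<psi> \<noteq> (\<lambda>x. 0) \<Longrightarrow> translation_invariant (pow_ideal v j) \<psi> \<Longrightarrow>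
    {x. \<psi> x \<noteq> 0} \<subseteq> pow_ideal v m \<Longrightarrow>
    \<exists>\<psi>'\<in>V. \<psi>' \<noteq> (\<lambda>x. 0) \<and> translation_invariant (pow_ideal v m) \<psi>' \<and> {x. \<psi>' x \<noteq> 0} \<subseteq> pow_ideal v m"
  using assms
proof (induction j arbitrary: \<psi> rule: int_ge_induct)
  case base
  then show ?case
    by blast
next
  case (step j)
  have "m < j + 1"
    using step.hyps by simp
  from exists_coarser_invariant[OF step.prems this] obtain \<psi>' where "\<psi>' \<in> V" "\<psi>' \<noteq> (\<lambda>x. 0)"
    "translation_invariant (pow_ideal v j) \<psi>'" "{x. \<psi>' x \<noteq> 0} \<subseteq> pow_ideal v m"
    by auto
  then show ?case
    by (rule step.IH)
qed

lemma indicator_mem_if_nonzero_mem: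
  assumes "\<psi> \<in> V" "\<psi> \<noteq> (\<lambda>x. 0)" "translation_invariant (pow_ideal v n) \<psi>"
    and "{x. \<psi> x \<noteq> 0} \<subseteq> pow_ideal v m"
  shows "indicator (pow_ideal v m) \<in> V"
proof -
  have "pow_ideal v (max n m) \<subseteq> pow_ideal v n"
    by (rule pow_ideal_antimono) simp
  then have "translation_invariant (pow_ideal v (max n m)) \<psi>"
    using assms(3) unfolding translation_invariant_def by blast
  then obtain \<psi>' where \<psi>': "\<psi>' \<in> V" "\<psi>' \<noteq> (\<lambda>x. 0)" "translation_invariant (pow_ideal v m) \<psi>'"
    "{x. \<psi>' x \<noteq> 0} \<subseteq> pow_ideal v m"
    using exists_invariant_at_support_level[where j = "max n m" and m = m and \<psi> = \<psi>] assms by auto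
  have \<psi>'_eq: "\<psi>' x = \<psi>' 0 * indicator (pow_ideal v m) x" for x
  proof (cases "x \<in> pow_ideal v m")
    case True
    then show ?thesis
      using \<psi>'(3) unfolding translation_invariant_def by (metis add_0 indicator_simps(1) mult.right_neutral)
  next
    case False
    then show ?thesis
      using \<psi>'(4) by auto
  qed
  have "\<psi>' 0 \<noteq> 0"
  proof
    assume "\<psi>' 0 = 0"
    then have "\<psi>' x = 0" for x
      using \<psi>'_eq[of x] by simp
    with \<psi>'(2) show False
      by blast
  qed
  have "indicator (pow_ideal v m) = (\<lambda>x. inverse (\<psi>' 0) * \<psi>' x)"
  proof
    fix x
    show "indicator (pow_ideal v m) x = inverse (\<psi>' 0) * \<psi>' x"
      using \<psi>'_eq[of x] \<open>\<psi>' 0 \<noteq> 0\<close> by simp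
  qed
  then show ?thesis
    using smult_mem[OF \<psi>'(1)] by simp
qed

lemma ball_indicator_mem:
  assumes "indicator (pow_ideal v m) \<in> V"
  shows "(\<lambda>x. indicator (pow_ideal v n) (x - c)) \<in> V"
proof -
  obtain a where a: "a \<noteq> 0" "v a = m - n"
    using exists_valuation by blast
  have "(\<lambda>x. indicator (pow_ideal v m) (a * x)) = (indicator (pow_ideal v n) :: 'f \<Rightarrow> 'k)"
  proof
    fix x
    show "indicator (pow_ideal v m) (a * x) = indicator (pow_ideal v n) x"
      using mult_mem_pow_ideal_iff[OF a(1), of x n] a(2) by (simp add: indicator_def mult.commute)
  qed
  then have "indicator (pow_ideal v n) \<in> V"
    using dilate_mem[OF assms a(1)] by simp
  then show ?thesis
    using translate_mem[where t = "- c"] by simp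
qed

lemma mem_if_covered_by_finitely_many_balls:
  assumes "\<And>n c. (\<lambda>x. indicator (pow_ideal v n) (x - c)) \<in> V"
  shows "finite C \<Longrightarrow> translation_invariant (pow_ideal v n) \<psi> \<Longrightarrow>
    (\<And>y. \<psi> y \<noteq> 0 \<Longrightarrow> \<exists>c\<in>C. close v n y c) \<Longrightarrow> \<psi> \<in> V"
proof (induction C arbitrary: \<psi> rule: finite_induct)
  case empty
  then have "\<psi> = (\<lambda>x. 0 * indicator (pow_ideal v n) (x - 0))"
    by auto
  then show ?case
    using smult_mem[OF assms[of n 0], of 0] by simp
next
  case (insert c C)
  let ?ball = "\<lambda>x. indicator (pow_ideal v n) (x - c) :: 'k"
  define \<psi>' where "\<psi>' x = \<psi> x - \<psi> c * ?ball x" for x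
  have ball_cong: "?ball x = ?ball y" if "close v n x y" for x y
  proof -
    have "close v n x c \<longleftrightarrow> close v n y c"
      using close_trans[OF that] close_trans[OF close_sym[OF that]] by blast
    then show ?thesis
      by (simp add: indicator_def close_iff_diff_mem)
  qed
  have "translation_invariant (pow_ideal v n) \<psi>'"
    unfolding translation_invariant_def
  proof (intro ballI allI)
    fix t x assume "t \<in> pow_ideal v n"
    then have "\<psi> (x + t) = \<psi> x" "?ball (x + t) = ?ball x"
      using insert.prems(1) ball_cong[of "x + t" x]
      by (simp_all add: translation_invariant_def close_iff_diff_mem)
    then show "\<psi>' (x + t) = \<psi>' x"
      by (simp add: \<psi>'_def)
  qed
  moreover have "\<exists>c'\<in>C. close v n y c'" if "\<psi>' y \<noteq> 0" for y
  proof (cases "close v n y c")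
    case True
    then have "\<psi> y = \<psi> c"
      using insert.prems(1) unfolding translation_invariant_def close_iff_diff_mem
      by (metis add.commute diff_add_cancel)
    with True that show ?thesis
      by (simp add: \<psi>'_def indicator_def close_iff_diff_mem)
  next
    case False
    with that have "\<psi> y \<noteq> 0"
      by (simp add: \<psi>'_def indicator_def close_iff_diff_mem)
    with False show ?thesis
      using insert.prems(2) by blast
  qed
  ultimately have "\<psi>' \<in> V"
    by (rule insert.IH)
  then have "(\<lambda>x. \<psi>' x + \<psi> c * ?ball x) \<in> V"
    using add_mem smult_mem[OF assms] by blast
  then show ?case
    by (simp add: \<psi>'_def)
qed

lemma mem_if_nonzero_mem:
  assumes "\<psi>\<^sub>0 \<in> V" "\<psi>\<^sub>0 \<noteq> (\<lambda>x. 0)" "translation_invariant (pow_ideal v n\<^sub>0) \<psi>\<^sub>0"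
    "{x. \<psi>\<^sub>0 x \<noteq> 0} \<subseteq> pow_ideal v m\<^sub>0"
    and inv: "translation_invariant (pow_ideal v n) \<psi>" and supp: "{x. \<psi> x \<noteq> 0} \<subseteq> pow_ideal v m"
  shows "\<psi> \<in> V"
proof -
  have balls: "(\<lambda>x. indicator (pow_ideal v n) (x - c)) \<in> V" for n c
    using ball_indicator_mem[OF indicator_mem_if_nonzero_mem[OF assms(1-4)]] .
  let ?n = "max n m"
  obtain C where C: "finite C" "\<forall>y. close v m y 0 \<longrightarrow> (\<exists>c\<in>C. close v ?n y c)"
    using finite_ball_cover[of m ?n 0] by auto
  have "pow_ideal v ?n \<subseteq> pow_ideal v n"
    by (rule pow_ideal_antimono) simp
  then have "translation_invariant (pow_ideal v ?n) \<psi>"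
    using inv unfolding translation_invariant_def by blast
  moreover have "\<exists>c\<in>C. close v ?n y c" if "\<psi> y \<noteq> 0" for y
    using that supp C(2) by auto
  ultimately show ?thesis
    using mem_if_covered_by_finitely_many_balls[OF balls C(1)] by blast
qed

end

section \<open>The induced representation and the big cell\<close>

lemma mmul_assoc: "mmul (mmul g h) k = mmul g (mmul (h::'f::field mat2) k)"
  by (cases g rule: prod_cases4; cases h rule: prod_cases4; cases k rule: prod_cases4)
    (simp add: algebra_simps)

lemma mmul_one2 [simp]: "mmul g one2 = g" "mmul one2 g = (g::'f::field mat2)"
  by (cases g rule: prod_cases4; simp add: one2_def)+

lemma mmul_GL2: "g \<in> GL2 \<Longrightarrow> h \<in> GL2 \<Longrightarrow> mmul g h \<in> (GL2::'f::field mat2 set)"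
proof (cases g rule: prod_cases4; cases h rule: prod_cases4)
  fix a b c d a' b' c' d' :: 'f
  assume "g \<in> GL2" "h \<in> GL2" and gh: "g = (a, b, c, d)" "h = (a', b', c', d')"
  then have nz: "(a * d - b * c) * (a' * d' - b' * c') \<noteq> 0"
    by (simp add: GL2_def)
  have det: "(a * a' + b * c') * (c * b' + d * d') - (a * b' + b * d') * (c * a' + d * c')
     = (a * d - b * c) * (a' * d' - b' * c')"
    by (simp add: algebra_simps)
  have "(a * a' + b * c') * (c * b' + d * d') - (a * b' + b * d') * (c * a' + d * c') \<noteq> 0"
    unfolding det by (rule nz)
  then show "mmul g h \<in> GL2"
    unfolding gh GL2_def by simp
qed

lemma Borel_GL2: "b \<in> Borel \<Longrightarrow> b \<in> GL2"
  by (cases b rule: prod_cases4) (auto simp: Borel_def GL2_def)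

lemma one2_GL2 [simp]: "one2 \<in> GL2"
  by (simp add: one2_def GL2_def)

lemma mclose_mono: "m \<le> n \<Longrightarrow> mclose v n g h \<Longrightarrow> mclose v m g h"
  by (cases g rule: prod_cases4; cases h rule: prod_cases4) (auto intro: close_mono)

lemma Ind_locally_constant:
  "f \<in> Ind v chi \<Longrightarrow> g \<in> GL2 \<Longrightarrow> \<exists>n. \<forall>h\<in>GL2. mclose v n g h \<longrightarrow> f h = f g"
  unfolding Ind_def locally_constant_G_def by blast

lemma Ind_equivariant:
  "f \<in> Ind v chi \<Longrightarrow> b \<in> Borel \<Longrightarrow> g \<in> GL2 \<Longrightarrow> f (mmul b g) = charP chi b * f g"
  unfolding Ind_def by blast

lemma Ind_vanishes_off_GL2: "f \<in> Ind v chi \<Longrightarrow> g \<notin> GL2 \<Longrightarrow> f g = 0"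
  unfolding Ind_def by blast

lemma zero_Ind: "(\<lambda>x. 0) \<in> Ind v chi"
  unfolding Ind_def locally_constant_G_def by simp

lemma locally_constant_G_combine:
  fixes v :: "'f::field \<Rightarrow> int" and f :: "'f mat2 \<Rightarrow> 'a" and g :: "'f mat2 \<Rightarrow> 'b"
  assumes "locally_constant_G v f" "locally_constant_G v g"
  shows "locally_constant_G v (\<lambda>x. F (f x) (g x))"
  unfolding locally_constant_G_def
proof
  fix x :: "'f mat2" assume "x \<in> GL2"
  then obtain n\<^sub>1 n\<^sub>2 where "\<forall>h\<in>GL2. mclose v n\<^sub>1 x h \<longrightarrow> f h = f x" "\<forall>h\<in>GL2. mclose v n\<^sub>2 x h \<longrightarrow> g h = g x"
    using assms unfolding locally_constant_G_def by blast
  then show "\<exists>n. \<forall>h\<in>GL2. mclose v n x h \<longrightarrow> F (f h) (g h) = F (f x) (g x)"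
    using mclose_mono[of n\<^sub>1 "max n\<^sub>1 n\<^sub>2" v] mclose_mono[of n\<^sub>2 "max n\<^sub>1 n\<^sub>2" v]
    by (intro exI[of _ "max n\<^sub>1 n\<^sub>2"]) simp
qed

lemma Ind_add: "f \<in> Ind v chi \<Longrightarrow> g \<in> Ind v chi \<Longrightarrow> (\<lambda>x. f x + g x) \<in> Ind v chi"
  unfolding Ind_def using locally_constant_G_combine[of v f g "(+)"] by (simp add: distrib_left)

lemma Ind_smult: "f \<in> Ind v chi \<Longrightarrow> (\<lambda>x. c * f x) \<in> Ind v chi"
  unfolding Ind_def using locally_constant_G_combine[of v f f "\<lambda>y _. c * y"] by (simp add: mult.left_commute)

lemma Ind_diff:
  assumes "f \<in> Ind v chi" "g \<in> Ind v chi"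
  shows "(\<lambda>x. f x - g x) \<in> Ind v chi"
  using Ind_add[OF assms(1) Ind_smult[OF assms(2), of "- 1"]] by simp

context local_field
begin

lemma close_add: "close v n x y \<Longrightarrow> close v n x' y' \<Longrightarrow> close v n (x + x') (y + y')"
  unfolding close_iff_diff_mem using pow_ideal_add[of "x - y" n "x' - y'"] by (simp add: algebra_simps)

lemma close_mult_right:
  assumes "close v N x y" "n + \<bar>v e\<bar> \<le> N"
  shows "close v n (x * e) (y * e)"
proof -
  have "x - y \<in> pow_ideal v N"
    using assms(1) by (simp add: close_iff_diff_mem)
  moreover have "e \<in> pow_ideal v (- \<bar>v e\<bar>)"
    using abs_ge_minus_self[of "v e"] by (simp add: pow_ideal_def)
  ultimately have "(x - y) * e \<in> pow_ideal v (N + - \<bar>v e\<bar>)"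
    by (rule pow_ideal_mult)
  moreover have "pow_ideal v (N + - \<bar>v e\<bar>) \<subseteq> pow_ideal v n"
    by (rule pow_ideal_antimono) (use assms(2) in simp)
  ultimately show ?thesis
    unfolding close_iff_diff_mem left_diff_distrib by blast
qed

lemma mclose_mmul_right:
  assumes "mclose v N g h" "n + \<bar>v b\<^sub>1\<bar> + \<bar>v b\<^sub>2\<bar> + \<bar>v b\<^sub>3\<bar> + \<bar>v b\<^sub>4\<bar> \<le> N"
  shows "mclose v n (mmul g (b\<^sub>1, b\<^sub>2, b\<^sub>3, b\<^sub>4)) (mmul h (b\<^sub>1, b\<^sub>2, b\<^sub>3, b\<^sub>4))"
proof (cases g rule: prod_cases4; cases h rule: prod_cases4)
  fix a b c d a' b' c' d' :: 'f
  assume gh: "g = (a, b, c, d)" "h = (a', b', c', d')"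
  have c: "close v N a a'" "close v N b b'" "close v N c c'" "close v N d d'"
    using assms(1) gh by auto
  have N: "n + \<bar>v b\<^sub>1\<bar> \<le> N" "n + \<bar>v b\<^sub>2\<bar> \<le> N" "n + \<bar>v b\<^sub>3\<bar> \<le> N" "n + \<bar>v b\<^sub>4\<bar> \<le> N"
    using assms(2) by auto
  note m = close_mult_right
  show ?thesis
    unfolding gh
    by (simp add: close_add m[OF c(1) N(1)] m[OF c(2) N(3)] m[OF c(1) N(2)] m[OF c(2) N(4)]
        m[OF c(3) N(1)] m[OF c(4) N(3)] m[OF c(3) N(2)] m[OF c(4) N(4)])
qed

lemma Ind_rtrans:
  assumes f: "f \<in> Ind v chi" and b: "b \<in> Borel"
  shows "rtrans b f \<in> Ind v chi"
proof -
  obtain b\<^sub>1 b\<^sub>2 b\<^sub>3 b\<^sub>4 where b_eq: "b = (b\<^sub>1, b\<^sub>2, b\<^sub>3, b\<^sub>4)"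
    by (cases b rule: prod_cases4)
  have bG: "b \<in> GL2"
    using Borel_GL2[OF b] .
  have "locally_constant_G v (rtrans b f)"
    unfolding locally_constant_G_def
  proof
    fix g :: "'f mat2" assume g: "g \<in> GL2"
    obtain n where n: "\<forall>h\<in>GL2. mclose v n (mmul g b) h \<longrightarrow> f h = f (mmul g b)"
      using Ind_locally_constant[OF f mmul_GL2[OF g bG]] by blast
    let ?N = "n + \<bar>v b\<^sub>1\<bar> + \<bar>v b\<^sub>2\<bar> + \<bar>v b\<^sub>3\<bar> + \<bar>v b\<^sub>4\<bar>"
    have "rtrans b f h = rtrans b f g" if h: "h \<in> GL2" "mclose v ?N g h" for h
    proof -
      have "mclose v n (mmul g b) (mmul h b)"
        unfolding b_eq by (rule mclose_mmul_right[OF h(2)]) simp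
      then show ?thesis
        using n mmul_GL2[OF h(1) bG] g h(1) by (simp add: rtrans_def)
    qed
    then show "\<exists>n. \<forall>h\<in>GL2. mclose v n g h \<longrightarrow> rtrans b f h = rtrans b f g"
      by blast
  qed
  moreover have "rtrans b f (mmul b' g) = charP chi b' * rtrans b f g" if "b' \<in> Borel" "g \<in> GL2" for b' g
    using that Ind_equivariant[OF f that(1) mmul_GL2[OF that(2) bG]] mmul_GL2[OF Borel_GL2[OF that(1)] that(2)]
    by (simp add: rtrans_def mmul_assoc)
  ultimately show ?thesis
    unfolding Ind_def by (simp add: rtrans_def)
qed

end

text \<open>(0, 1, 1, x) is w u(x), with w = (0, 1, 1, 0) and u(x) = (1, x, 0, 1); by the Bruhat
  decomposition G = P \<union> P w U, a function in Ind vanishing at 1 is determined by this restriction.\<close>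
definition cell_restr :: "('f::field mat2 \<Rightarrow> 'k) \<Rightarrow> 'f \<Rightarrow> 'k" where
  "cell_restr f x = f (0, 1, 1, x)"

lemma cell_GL2 [simp]: "(0, 1, 1, x) \<in> (GL2 :: 'f::field mat2 set)"
  by (simp add: GL2_def)

lemma bruhat_decomposition:
  assumes "g \<in> GL2" "g \<notin> Borel"
  shows "\<exists>b\<in>Borel. \<exists>x. g = mmul b (0, 1, 1, x)"
proof (cases g rule: prod_cases4)
  case (fields a b c d)
  with assms have det: "a * d - b * c \<noteq> 0" and c: "c \<noteq> 0"
    by (auto simp: GL2_def Borel_def)
  have "b - a * d / c \<noteq> 0"
  proof
    assume "b - a * d / c = 0"
    then have "a * d - b * c = 0"
      using c by (simp add: field_simps)
    with det show False
      by simp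
  qed
  with c have "(b - a * d / c, a, 0, c) \<in> Borel"
    by (simp add: Borel_def)
  moreover have "g = mmul (b - a * d / c, a, 0, c) (0, 1, 1, d / c)"
    using c fields by (simp add: field_simps)
  ultimately show ?thesis
    by blast
qed

lemma Ind_eq_if_cell_restr_eq:
  fixes f f' :: "'f::field mat2 \<Rightarrow> 'k::field"
  assumes f: "f \<in> Ind v chi" "f one2 = 0" and f': "f' \<in> Ind v chi" "f' one2 = 0"
    and eq: "cell_restr f = cell_restr f'"
  shows "f = f'"
proof
  fix g :: "'f mat2"
  consider "g \<notin> GL2" | "g \<in> Borel" | "g \<in> GL2" "g \<notin> Borel"
    using Borel_GL2 by blast
  then show "f g = f' g"
  proof cases
    case 1
    then show ?thesis
      using Ind_vanishes_off_GL2 f(1) f'(1) by metis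
  next
    case 2
    then show ?thesis
      using Ind_equivariant[OF f(1) 2 one2_GL2] Ind_equivariant[OF f'(1) 2 one2_GL2] f(2) f'(2) by simp
  next
    case 3
    then obtain b x where "b \<in> Borel" "g = mmul b (0, 1, 1, x)"
      using bruhat_decomposition by blast
    then show ?thesis
      using Ind_equivariant[OF f(1)] Ind_equivariant[OF f'(1)] fun_cong[OF eq, of x]
      by (simp add: cell_restr_def)
  qed
qed

lemma cell_restr_locally_constant:
  fixes f :: "'f::field mat2 \<Rightarrow> 'k::field"
  assumes "f \<in> Ind v chi"
  shows "\<exists>n. \<forall>y. close v n x y \<longrightarrow> cell_restr f y = cell_restr f x"
proof -
  obtain n where n: "\<forall>h\<in>GL2. mclose v n (0, 1, 1, x) h \<longrightarrow> f h = f (0, 1, 1, x)"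
    using Ind_locally_constant[OF assms cell_GL2] by blast
  show ?thesis
  proof (intro exI allI impI)
    fix y assume "close v n x y"
    then have "mclose v n (0, 1, 1, x) (0, 1, 1, y)"
      by simp
    then show "cell_restr f y = cell_restr f x"
      using n cell_GL2 unfolding cell_restr_def by blast
  qed
qed

lemma cell_restr_rtrans_unipotent: "cell_restr (rtrans (1, t, 0, 1) f) = (\<lambda>x. cell_restr f (x + t))"
  by (simp add: fun_eq_iff cell_restr_def rtrans_def add.commute)

lemma cell_restr_rtrans_diagonal:
  assumes "f \<in> Ind v chi" "a \<noteq> 0"
  shows "cell_restr (rtrans (inverse a, 0, 0, 1) f) = (\<lambda>x. chi 1 (inverse a) * cell_restr f (a * x))"
proof
  fix x
  have e: "mmul (0, 1, 1, x) (inverse a, 0, 0, 1) = mmul (1, 0, 0, inverse a) (0, 1, 1, a * x)"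
    using assms(2) by simp
  have "(1, 0, 0, inverse a) \<in> Borel"
    using assms(2) by (simp add: Borel_def)
  then have "f (mmul (1, 0, 0, inverse a) (0, 1, 1, a * x)) = chi 1 (inverse a) * f (0, 1, 1, a * x)"
    using Ind_equivariant[OF assms(1) _ cell_GL2] by (simp only: charP.simps)
  then show "cell_restr (rtrans (inverse a, 0, 0, 1) f) x = chi 1 (inverse a) * cell_restr f (a * x)"
    unfolding cell_restr_def rtrans_def e by simp
qed

context local_field
begin

lemma cell_restr_support:
  assumes f: "f \<in> Ind v chi" "f one2 = 0"
  shows "\<exists>m. {x. cell_restr f x \<noteq> 0} \<subseteq> pow_ideal v m"
proof -
  obtain n where n: "\<forall>h\<in>GL2. mclose v n one2 h \<longrightarrow> f h = f one2"
    using Ind_locally_constant[OF f(1) one2_GL2] by blast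
  have "cell_restr f y = 0" if y: "y \<notin> pow_ideal v (1 - n)" for y
  proof -
    have "y \<noteq> 0" "v y < 1 - n"
      using y by (auto simp: pow_ideal_def)
    then have "n \<le> v (- inverse y)"
      using v_inverse by simp
    then have "mclose v n one2 (1, 0, inverse y, 1)"
      by (simp add: one2_def close_def)
    then have "f (1, 0, inverse y, 1) = f one2"
      using n by (simp add: GL2_def)
    then have "f (1, 0, inverse y, 1) = 0"
      using f(2) by simp
    moreover have "(0, 1, 1, y) = mmul (- inverse y, 1, 0, y) (1, 0, inverse y, 1)"
      using \<open>y \<noteq> 0\<close> by simp
    moreover have "(- inverse y, 1, 0, y) \<in> Borel"
      using \<open>y \<noteq> 0\<close> by (simp add: Borel_def)
    ultimately show ?thesis
      using Ind_equivariant[OF f(1), of "(- inverse y, 1, 0, y)" "(1, 0, inverse y, 1)"]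
      by (simp add: cell_restr_def GL2_def)
  qed
  then show ?thesis
    by blast
qed

lemma cell_restr_uniformly_locally_constant:
  assumes "f \<in> Ind v chi" "f one2 = 0"
  obtains n m where "translation_invariant (pow_ideal v n) (cell_restr f)"
    "{x. cell_restr f x \<noteq> 0} \<subseteq> pow_ideal v m"
proof -
  obtain m where m: "{x. cell_restr f x \<noteq> 0} \<subseteq> pow_ideal v m"
    using cell_restr_support[OF assms] by blast
  then obtain n where "translation_invariant (pow_ideal v n) (cell_restr f)"
    using translation_invariant_if_locally_constant_compact_support cell_restr_locally_constant[OF assms(1)] by blast
  with m show ?thesis
    using that by blast
qed

end

section \<open>Eigenvectors of the Borel subgroup\<close>

lemma smooth_char_T_nonzero: "smooth_char_T v chi \<Longrightarrow> a \<noteq> 0 \<Longrightarrow> d \<noteq> 0 \<Longrightarrow> chi a d \<noteq> 0"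
  unfolding smooth_char_T_def by blast

lemma smooth_char_T_mult:
  "smooth_char_T v chi \<Longrightarrow> a \<noteq> 0 \<Longrightarrow> d \<noteq> 0 \<Longrightarrow> a' \<noteq> 0 \<Longrightarrow> d' \<noteq> 0 \<Longrightarrow>
    chi (a * a') (d * d') = chi a d * chi a' d'"
  unfolding smooth_char_T_def by blast

lemma smooth_char_T_one: "smooth_char_T v chi \<Longrightarrow> chi 1 1 = 1"
  using smooth_char_T_mult[of v chi 1 1 1 1] smooth_char_T_nonzero[of v chi 1 1] by simp

locale smooth_G_rep = local_field v p
  for v :: "'f::field \<Rightarrow> int" and p +
  fixes scale :: "'k::field \<Rightarrow> 'w::ab_group_add \<Rightarrow> 'w" and act :: "'f mat2 \<Rightarrow> 'w \<Rightarrow> 'w"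
  assumes smooth_rep: "smooth_rep v scale act"
begin

sublocale vs: vector_space scale
  using smooth_rep by (simp add: smooth_rep_def)

lemma act_linear: "g \<in> GL2 \<Longrightarrow> Vector_Spaces.linear scale scale (act g)"
  using smooth_rep by (simp add: smooth_rep_def)

lemma act_scale: "g \<in> GL2 \<Longrightarrow> act g (scale c w) = scale c (act g w)"
  using act_linear[of g] by (simp add: Vector_Spaces.linear_iff)

lemma act_zero: "g \<in> GL2 \<Longrightarrow> act g 0 = 0"
  using act_scale[of g 0 0] by simp

lemma act_mmul: "g \<in> GL2 \<Longrightarrow> h \<in> GL2 \<Longrightarrow> act (mmul g h) w = act g (act h w)"
  using smooth_rep by (simp add: smooth_rep_def)

lemma act_one2: "act one2 w = w"
  using smooth_rep by (simp add: smooth_rep_def)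

lemma act_smooth: "\<exists>n. \<forall>g\<in>Kcong v n. act g w = w"
  using smooth_rep by (simp add: smooth_rep_def)

lemma scale_eq_self_iff: "w \<noteq> 0 \<Longrightarrow> scale c w = w \<longleftrightarrow> c = 1"
  using vs.scale_right_imp_eq[of w c 1] by auto

lemma lower_unipotent_fixes_eigenvector:
  assumes chi: "smooth_char_T v chi" and eig: "\<forall>b\<in>Borel. act b w = scale (charP chi b) w"
  shows "act (1, 0, c, 1) w = w"
proof (cases "c = 0")
  case True
  then show ?thesis
    using act_one2 by (simp add: one2_def)
next
  case False
  obtain n where n: "\<forall>g\<in>Kcong v n. act g w = w"
    using act_smooth by blast
  \<comment> \<open>conjugating by diag(s, 1) moves c into the range where smoothness applies\<close>
  obtain s where s: "s \<noteq> 0" "v s = n - v c"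
    using exists_valuation by blast
  have "v (c * s) = n"
    using v_mult[OF False s(1)] s(2) by simp
  then have "(1, 0, c * s, 1) \<in> Kcong v n"
    by (simp add: Kcong_def GL2_def one2_def close_def)
  then have small: "act (1, 0, c * s, 1) w = w"
    using n by blast
  have B: "(s, 0, 0, 1) \<in> Borel" "(inverse s, 0, 0, 1) \<in> Borel"
    using s(1) by (auto simp: Borel_def)
  have G: "(s, 0, 0, 1) \<in> GL2" "(inverse s, 0, 0, 1) \<in> GL2" "(1, 0, c * s, 1) \<in> GL2"
    using s(1) by (simp_all add: GL2_def)
  have "(1, 0, c, 1) = mmul (s, 0, 0, 1) (mmul (1, 0, c * s, 1) (inverse s, 0, 0, 1))"
    using s(1) by simp
  then have "act (1, 0, c, 1) w = act (s, 0, 0, 1) (act (1, 0, c * s, 1) (act (inverse s, 0, 0, 1) w))"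
    using act_mmul G mmul_GL2 by metis
  also have "\<dots> = scale (chi (inverse s) 1 * chi s 1) w"
    using eig B G(3) small act_scale[OF G(1)] act_scale[OF G(3)] by (simp add: mult.commute)
  also have "chi (inverse s) 1 * chi s 1 = 1"
    using smooth_char_T_mult[OF chi, of "inverse s" 1 s 1] smooth_char_T_one[OF chi] s(1) by simp
  finally show ?thesis
    by simp
qed

lemma eigencharacter_symmetric:
  assumes chi: "smooth_char_T v chi" and "w \<noteq> 0"
    and eig: "\<forall>b\<in>Borel. act b w = scale (charP chi b) w" and "a \<noteq> 0" "d \<noteq> 0"
  shows "chi a d = chi d a"
proof -
  have upper: "act (1, x, 0, 1) w = w" for x
    using eig smooth_char_T_one[OF chi] by (simp add: Borel_def)
  have lower: "act (1, 0, x, 1) w = w" for x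
    by (rule lower_unipotent_fixes_eigenvector[OF chi eig])
  have unipotent_GL2: "(1, x, 0, 1) \<in> GL2" "(1, 0, x, 1) \<in> GL2" for x :: 'f
    by (simp_all add: GL2_def)
  have mmul_fixes: "act (mmul g h) w = w" if "g \<in> GL2" "h \<in> GL2" "act g w = w" "act h w = w" for g h
    using act_mmul that by simp
  have diag: "chi x (inverse x) = 1" if "x \<noteq> 0" for x
  proof -
    \<comment> \<open>diag(x, 1/x) as a product of unipotent matrices\<close>
    let ?X = "mmul (1, x, 0, 1) (mmul (1, 0, - inverse x, 1)
        (mmul (1, x, 0, 1) (mmul (1, - 1, 0, 1) (mmul (1, 0, 1, 1) (1, - 1, 0, 1)))))"
    have "act ?X w = w"
      by (intro mmul_fixes mmul_GL2 unipotent_GL2 upper lower)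
    moreover have "?X = (x, 0, 0, inverse x)"
      using that by (simp add: field_simps)
    ultimately have "act (x, 0, 0, inverse x) w = w"
      by simp
    moreover have "(x, 0, 0, inverse x) \<in> Borel"
      using that by (simp add: Borel_def)
    ultimately show ?thesis
      using eig scale_eq_self_iff[OF \<open>w \<noteq> 0\<close>] by simp
  qed
  have "chi x 1 = chi 1 x" if "x \<noteq> 0" for x
  proof -
    have "chi x 1 * chi 1 (inverse x) = 1" "chi 1 x * chi 1 (inverse x) = 1"
      using diag[OF that] smooth_char_T_mult[OF chi, of x 1 1 "inverse x"]
        smooth_char_T_mult[OF chi, of 1 x 1 "inverse x"] smooth_char_T_one[OF chi] that by simp_all
    then have "chi x 1 * chi 1 (inverse x) = chi 1 x * chi 1 (inverse x)"
      by simp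
    then show ?thesis
      using smooth_char_T_nonzero[OF chi, of 1 "inverse x"] that by simp
  qed
  then show ?thesis
    using smooth_char_T_mult[OF chi, of a 1 1 d] smooth_char_T_mult[OF chi, of d 1 1 a] assms(4,5)
    by (simp add: mult.commute)
qed

end

context local_field
begin

lemma Ind_eigenfunction_vanishes_at_one2:
  assumes asym: "\<exists>a d. a \<noteq> 0 \<and> d \<noteq> 0 \<and> chi a d \<noteq> conj_s chi a d"
    and h: "h \<in> Ind v chi" and eig: "\<And>b x. b \<in> Borel \<Longrightarrow> x \<in> GL2 \<Longrightarrow> h (mmul x b) = charP chi b * h x"
  shows "h one2 = 0"
proof -
  define w :: "'f mat2" where "w = (0, 1, 1, 0)"
  have wG: "w \<in> GL2"
    by (simp add: w_def GL2_def)
  obtain a d where ad: "a \<noteq> 0" "d \<noteq> 0" "chi a d \<noteq> chi d a"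
    using asym unfolding conj_s_def by blast
  have "(a, 0, 0, d) \<in> Borel" "(d, 0, 0, a) \<in> Borel"
    using ad by (auto simp: Borel_def)
  moreover have "mmul w (a, 0, 0, d) = mmul (d, 0, 0, a) w"
    by (simp add: w_def)
  ultimately have "chi a d * h w = chi d a * h w"
    using eig[OF _ wG] Ind_equivariant[OF h _ wG] by (metis charP.simps)
  then have hw: "h w = 0"
    using ad(3) by simp
  obtain n where n: "\<forall>g\<in>GL2. mclose v n one2 g \<longrightarrow> h g = h one2"
    using Ind_locally_constant[OF h one2_GL2] by blast
  obtain c where c: "c \<noteq> 0" "v c = n"
    using exists_valuation by blast
  have "(1, inverse c, 0, 1) \<in> Borel" "(- inverse c, 1, 0, c) \<in> Borel"
    using c by (simp_all add: Borel_def)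
  moreover have "(1, 0, c, 1) = mmul (- inverse c, 1, 0, c) (mmul w (1, inverse c, 0, 1))"
    using c by (simp add: w_def)
  ultimately have "h (1, 0, c, 1) = 0"
    using eig[OF _ wG] Ind_equivariant[OF h] mmul_GL2[OF wG Borel_GL2] hw by simp
  moreover have "mclose v n one2 (1, 0, c, 1)"
    using c by (simp add: one2_def close_def)
  ultimately show ?thesis
    using n by (simp add: GL2_def)
qed

end

section \<open>Kernels of P-equivariant maps on Ind chi\<close>

definition eigen_defect :: "('f \<Rightarrow> 'f \<Rightarrow> 'k::field) \<Rightarrow> 'f::field mat2 \<Rightarrow> ('f mat2 \<Rightarrow> 'k) \<Rightarrow> 'f mat2 \<Rightarrow> 'k" where
  "eigen_defect chi b f = (\<lambda>x. rtrans b f x - charP chi b * f x)"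

lemma rtrans_one2: "f \<in> Ind v chi \<Longrightarrow> b \<in> Borel \<Longrightarrow> rtrans b f one2 = charP chi b * f one2"
  using Ind_equivariant[of f v chi b one2] by (simp add: rtrans_def)

lemma eigen_defect_one2: "f \<in> Ind v chi \<Longrightarrow> b \<in> Borel \<Longrightarrow> eigen_defect chi b f one2 = 0"
  by (simp add: eigen_defect_def rtrans_one2)

locale P_hom = smooth_G_rep v p scale act
  for v :: "'f::field \<Rightarrow> int" and p and scale :: "'k::field \<Rightarrow> 'w::ab_group_add \<Rightarrow> 'w" and act +
  fixes chi :: "'f \<Rightarrow> 'f \<Rightarrow> 'k" and \<phi> :: "('f mat2 \<Rightarrow> 'k) \<Rightarrow> 'w"
  assumes chi: "smooth_char_T v chi" and hom: "\<phi> \<in> HomP v chi scale act"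
begin

lemma phi_add: "f \<in> Ind v chi \<Longrightarrow> g \<in> Ind v chi \<Longrightarrow> \<phi> (\<lambda>x. f x + g x) = \<phi> f + \<phi> g"
  using hom unfolding HomP_def by blast

lemma phi_smult: "f \<in> Ind v chi \<Longrightarrow> \<phi> (\<lambda>x. c * f x) = scale c (\<phi> f)"
  using hom unfolding HomP_def by blast

lemma phi_rtrans: "b \<in> Borel \<Longrightarrow> f \<in> Ind v chi \<Longrightarrow> \<phi> (rtrans b f) = act b (\<phi> f)"
  using hom unfolding HomP_def by blast

lemma phi_diff:
  assumes "f \<in> Ind v chi" "g \<in> Ind v chi"
  shows "\<phi> (\<lambda>x. f x - g x) = \<phi> f - \<phi> g"
  using phi_add[OF assms(1) Ind_smult[OF assms(2), of "- 1"]] phi_smult[OF assms(2), of "- 1"]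
  by (simp add: vs.scale_minus_left)

lemma eigen_defect_Ind: "f \<in> Ind v chi \<Longrightarrow> b \<in> Borel \<Longrightarrow> eigen_defect chi b f \<in> Ind v chi"
  unfolding eigen_defect_def by (intro Ind_diff Ind_rtrans Ind_smult)

lemma phi_eigen_defect:
  "f \<in> Ind v chi \<Longrightarrow> b \<in> Borel \<Longrightarrow> \<phi> (eigen_defect chi b f) = act b (\<phi> f) - scale (charP chi b) (\<phi> f)"
  unfolding eigen_defect_def by (simp add: phi_diff Ind_rtrans Ind_smult phi_rtrans phi_smult)

lemma kernel_trivial_if_trivial_on_cell:
  assumes asym: "\<exists>a d. a \<noteq> 0 \<and> d \<noteq> 0 \<and> chi a d \<noteq> conj_s chi a d"
    and triv: "\<And>f. f \<in> Ind v chi \<Longrightarrow> \<phi> f = 0 \<Longrightarrow> f one2 = 0 \<Longrightarrow> f = (\<lambda>x. 0)"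
    and h: "h \<in> Ind v chi" "\<phi> h = 0"
  shows "h = (\<lambda>x. 0)"
proof -
  have defect: "eigen_defect chi b h = (\<lambda>x. 0)" if b: "b \<in> Borel" for b
    using triv eigen_defect_Ind[OF h(1) b] phi_eigen_defect[OF h(1) b] eigen_defect_one2[OF h(1) b]
      h(2) act_zero[OF Borel_GL2[OF b]]
    by simp
  have "h (mmul x b) = charP chi b * h x" if "b \<in> Borel" "x \<in> GL2" for b x
    using that fun_cong[OF defect[OF that(1)], of x] by (simp add: eigen_defect_def rtrans_def)
  then have "h one2 = 0"
    using Ind_eigenfunction_vanishes_at_one2[OF asym h(1)] by blast
  with triv h show ?thesis
    by blast
qed

lemma phi_zero_if_kernel_contains_cell:
  assumes asym: "\<exists>a d. a \<noteq> 0 \<and> d \<noteq> 0 \<and> chi a d \<noteq> conj_s chi a d"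
    and cell: "\<And>f. f \<in> Ind v chi \<Longrightarrow> f one2 = 0 \<Longrightarrow> \<phi> f = 0"
    and f: "f \<in> Ind v chi"
  shows "\<phi> f = 0"
proof (rule ccontr)
  assume "\<phi> f \<noteq> 0"
  have "act b (\<phi> f) = scale (charP chi b) (\<phi> f)" if b: "b \<in> Borel" for b
    using cell[OF eigen_defect_Ind[OF f b] eigen_defect_one2[OF f b]] phi_eigen_defect[OF f b] by simp
  then have "chi a d = chi d a" if "a \<noteq> 0" "d \<noteq> 0" for a d
    using eigencharacter_symmetric[OF chi \<open>\<phi> f \<noteq> 0\<close>] that by blast
  with asym show False
    unfolding conj_s_def by blast
qed

lemma affine_stable_cell_kernel:
  assumes "CHAR('k) = p"
  shows "affine_stable_space v p (cell_restr ` {f \<in> Ind v chi. \<phi> f = 0 \<and> f one2 = 0})"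
    (is "affine_stable_space v p (cell_restr ` ?K)")
proof -
  have K_add: "(\<lambda>x. f x + g x) \<in> ?K" if "f \<in> ?K" "g \<in> ?K" for f g
    using that by (simp add: Ind_add phi_add)
  have K_smult: "(\<lambda>x. c * f x) \<in> ?K" if "f \<in> ?K" for f c
    using that by (simp add: Ind_smult phi_smult)
  have K_rtrans: "rtrans b f \<in> ?K" if f: "f \<in> ?K" and b: "b \<in> Borel" for f b
  proof -
    from f have "f \<in> Ind v chi" "\<phi> f = 0" "f one2 = 0"
      by simp_all
    with b show ?thesis
      by (simp add: Ind_rtrans phi_rtrans rtrans_one2 act_zero Borel_GL2)
  qed
  show ?thesis
  proof (unfold_locales)
    show "CHAR('k) = p"
      by (fact assms)
    show "(\<lambda>x. \<psi> x + \<psi>' x) \<in> cell_restr ` ?K"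
      if in_image: "\<psi> \<in> cell_restr ` ?K" "\<psi>' \<in> cell_restr ` ?K" for \<psi> \<psi>'
    proof -
      obtain f g where "f \<in> ?K" "g \<in> ?K" "\<psi> = cell_restr f" "\<psi>' = cell_restr g"
        using in_image by blast
      then show ?thesis
        using K_add[of f g] by (auto simp: cell_restr_def intro!: image_eqI[of _ _ "\<lambda>x. f x + g x"])
    qed
    show "(\<lambda>x. c * \<psi> x) \<in> cell_restr ` ?K" if in_image: "\<psi> \<in> cell_restr ` ?K" for \<psi> c
    proof -
      obtain f where "f \<in> ?K" "\<psi> = cell_restr f"
        using in_image by blast
      then show ?thesis
        using K_smult[of f c] by (auto simp: cell_restr_def intro!: image_eqI[of _ _ "\<lambda>x. c * f x"])
    qed
    show "(\<lambda>x. \<psi> (x + t)) \<in> cell_restr ` ?K" if in_image: "\<psi> \<in> cell_restr ` ?K" for \<psi> t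
    proof -
      obtain f where f: "f \<in> ?K" "\<psi> = cell_restr f"
        using in_image by blast
      have "(1, t, 0, 1) \<in> Borel"
        by (simp add: Borel_def)
      then have "rtrans (1, t, 0, 1) f \<in> ?K"
        using K_rtrans f(1) by blast
      moreover have "(\<lambda>x. \<psi> (x + t)) = cell_restr (rtrans (1, t, 0, 1) f)"
        by (simp add: f(2) cell_restr_rtrans_unipotent)
      ultimately show ?thesis
        by blast
    qed
    show "(\<lambda>x. \<psi> (a * x)) \<in> cell_restr ` ?K" if in_image: "\<psi> \<in> cell_restr ` ?K" and a: "a \<noteq> 0" for \<psi> a
    proof -
      obtain f where f: "f \<in> ?K" "\<psi> = cell_restr f"
        using in_image by blast
      define c where "c = inverse (chi 1 (inverse a))"
      have "(inverse a, 0, 0, 1) \<in> Borel"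
        using a by (simp add: Borel_def)
      then have "(\<lambda>x. c * rtrans (inverse a, 0, 0, 1) f x) \<in> ?K"
        using K_rtrans K_smult f(1) by blast
      moreover have "(\<lambda>x. \<psi> (a * x)) = cell_restr (\<lambda>x. c * rtrans (inverse a, 0, 0, 1) f x)"
      proof
        fix x
        have "cell_restr (rtrans (inverse a, 0, 0, 1) f) x = chi 1 (inverse a) * \<psi> (a * x)"
          using cell_restr_rtrans_diagonal[of f v chi a] f a by simp
        then show "\<psi> (a * x) = cell_restr (\<lambda>x. c * rtrans (inverse a, 0, 0, 1) f x) x"
          using smooth_char_T_nonzero[OF chi, of 1 "inverse a"] a by (simp add: c_def cell_restr_def)
      qed
      ultimately show ?thesis
        by blast
    qed
  qed
qed

lemma kernel_contains_cell_if_nontrivial_on_cell: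
  assumes char: "CHAR('k) = p"
    and f\<^sub>0: "f\<^sub>0 \<in> Ind v chi" "\<phi> f\<^sub>0 = 0" "f\<^sub>0 one2 = 0" "f\<^sub>0 \<noteq> (\<lambda>x. 0)"
    and f: "f \<in> Ind v chi" "f one2 = 0"
  shows "\<phi> f = 0"
proof -
  let ?K = "{f \<in> Ind v chi. \<phi> f = 0 \<and> f one2 = 0}"
  interpret V: affine_stable_space v p "cell_restr ` ?K"
    by (rule affine_stable_cell_kernel[OF char])
  have "cell_restr f\<^sub>0 \<noteq> (\<lambda>x. 0)"
  proof
    assume "cell_restr f\<^sub>0 = (\<lambda>x. 0)"
    then have "cell_restr f\<^sub>0 = cell_restr (\<lambda>x. 0)"
      by (simp add: fun_eq_iff cell_restr_def)
    then have "f\<^sub>0 = (\<lambda>x. 0)"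
      using Ind_eq_if_cell_restr_eq[OF f\<^sub>0(1,3) zero_Ind] by simp
    with f\<^sub>0(4) show False ..
  qed
  moreover obtain n\<^sub>0 m\<^sub>0 where "translation_invariant (pow_ideal v n\<^sub>0) (cell_restr f\<^sub>0)"
    "{x. cell_restr f\<^sub>0 x \<noteq> 0} \<subseteq> pow_ideal v m\<^sub>0"
    using cell_restr_uniformly_locally_constant[OF f\<^sub>0(1,3)] .
  moreover obtain n m where "translation_invariant (pow_ideal v n) (cell_restr f)"
    "{x. cell_restr f x \<noteq> 0} \<subseteq> pow_ideal v m"
    using cell_restr_uniformly_locally_constant[OF f] .
  ultimately have "cell_restr f \<in> cell_restr ` ?K"
    using V.mem_if_nonzero_mem f\<^sub>0 by blast
  then obtain f' where "f' \<in> ?K" "cell_restr f = cell_restr f'"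
    by blast
  then show ?thesis
    using Ind_eq_if_cell_restr_eq[OF f] by auto
qed

lemma inj_on_Ind:
  assumes char: "CHAR('k) = p"
    and asym: "\<exists>a d. a \<noteq> 0 \<and> d \<noteq> 0 \<and> chi a d \<noteq> conj_s chi a d"
    and nonzero: "\<exists>f\<in>Ind v chi. \<phi> f \<noteq> 0"
  shows "inj_on \<phi> (Ind v chi)"
proof (rule inj_onI)
  have trivial_on_cell: "f = (\<lambda>x. 0)" if f: "f \<in> Ind v chi" "\<phi> f = 0" "f one2 = 0" for f
  proof (rule ccontr)
    assume "f \<noteq> (\<lambda>x. 0)"
    then have "\<phi> g = 0" if "g \<in> Ind v chi" "g one2 = 0" for g
      using kernel_contains_cell_if_nontrivial_on_cell[OF char f] that by blast
    then have "\<phi> g = 0" if "g \<in> Ind v chi" for g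
      using phi_zero_if_kernel_contains_cell[OF asym] that by blast
    with nonzero show False
      by blast
  qed
  fix f g assume "f \<in> Ind v chi" "g \<in> Ind v chi" "\<phi> f = \<phi> g"
  then have "(\<lambda>x. f x - g x) \<in> Ind v chi" "\<phi> (\<lambda>x. f x - g x) = 0"
    using Ind_diff phi_diff by simp_all
  then have "(\<lambda>x. f x - g x) = (\<lambda>x. 0)"
    using kernel_trivial_if_trivial_on_cell[OF asym trivial_on_cell] by blast
  then show "f = g"
    by (simp add: fun_eq_iff)
qed

end

theorem corollary5p2:
  fixes v :: "'f::field \<Rightarrow> int" and p :: nat
    and chi :: "'f \<Rightarrow> 'f \<Rightarrow> 'k::field"
    and scale :: "'k \<Rightarrow> 'w::ab_group_add \<Rightarrow> 'w"
    and act :: "'f mat2 \<Rightarrow> 'w \<Rightarrow> 'w"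
    and \<phi> :: "('f mat2 \<Rightarrow> 'k) \<Rightarrow> 'w"
  assumes "nonarch_local_field v p"
    and "is_Fpbar p TYPE('k)"
    and "smooth_char_T v chi"
    and "\<exists>a d. a \<noteq> 0 \<and> d \<noteq> 0 \<and> chi a d \<noteq> conj_s chi a d"
    and "smooth_rep v scale act"
    and "\<phi> \<in> HomP v chi scale act"
    and "\<exists>f\<in>Ind v chi. \<phi> f \<noteq> 0"
  shows "inj_on \<phi> (Ind v chi)"
proof -
  interpret P_hom v p scale act chi \<phi>
    using assms(1,3,5,6)
    by (intro P_hom.intro smooth_G_rep.intro local_fieldI P_hom_axioms.intro smooth_G_rep_axioms.intro)
  \<comment> \<open>only the characteristic of the coefficient field is used, not its algebraic closedness\<close>
  have "CHAR('k) = p"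
    using assms(2) by (simp add: is_Fpbar_def)
  then show ?thesis
    using inj_on_Ind assms(4,7) by blast
qed

end
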